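(* Let $O$ be an object of $\mathsf{CRP}_{\mathcal{L}^{(t)}_{m,q}}$ and let $A$ be a Lazardian $O$-algebra. An $A$-algebra $B$ is an object of $\mathsf{CRP}_A$ if and only if (regarded as an $O$-algebra) it is an object of $\mathsf{CRP}_O$. In particular, restriction of scalars $\mathsf{Alg}_A\to\mathsf{Alg}_O$ restricts to a functor $\mathsf{CRP}_A\to\mathsf{CRP}_O$.
   Context: Fix a prime $p$, $t\in\mathbf{Z}$, $m\in\mathbf{N}\cup\{\infty\}$, $q>1$ a power of $p$, and $\mathcal{L}^{(t)}_{m,q}:=\mathbf{Z}[\omega_i^{q^{-\infty}}\mid1\le i\le m][[\pi]]/(p-\sum_{i=1}^m\omega_i^{q^t}\pi^i,\pi^{m+1})$ (with $\pi^{\infty+1}:=0$). For a ring $R$ receiving a ring map from $\mathcal{L}^{(t)}_{m,q}$ (so $\pi$ has an image in $R$), $\mathsf{CRP}_R$ is the full subcategory of $R$-algebras $B$ such that $B$ is $\pi B$-adically complete, $B/\pi B$ is a perfect $\mathbf{F}_p$-algebra, and the multiplication map $\pi R\otimes_RB\to B$ is injective. A Lazardian $O$-algebra is an $O$-algebra $A$ that is $\pi A$-adically complete and such that $\pi O\otimes_OA\to A$ is injective. *)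

theory Defs
  imports Main "HOL-Computational_Algebra.Primes" "HOL-Library.Extended_Nat"
begin

definition ring_hom_tc :: "('r::comm_ring_1 \<Rightarrow> 's::comm_ring_1) \<Rightarrow> bool" where
  "ring_hom_tc h \<longleftrightarrow> h 1 = 1 \<and> (\<forall>x y. h (x + y) = h x + h y) \<and> (\<forall>x y. h (x * y) = h x * h y)"

definition pow_ideal :: "'r::comm_ring_1 \<Rightarrow> nat \<Rightarrow> 'r set" where
  "pow_ideal x n = {x ^ n * r | r. True}"

text \<open>x R-adic completeness: the canonical map R \<rightarrow> lim_n R/x^n R is bijective.
  An element of the inverse limit is represented by lifts f n of its components
  (f n a lift of the component in R/x^n R), compatibility meaning f (n+1) - f n \<in> x^n R.\<close>
definition adically_complete :: "'r::comm_ring_1 \<Rightarrow> bool" where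
  "adically_complete x \<longleftrightarrow>
     (\<forall>r. (\<forall>n. r \<in> pow_ideal x n) \<longrightarrow> r = 0) \<and>
     (\<forall>f :: nat \<Rightarrow> 'r. (\<forall>n. f (Suc n) - f n \<in> pow_ideal x n) \<longrightarrow>
        (\<exists>r. \<forall>n. r - f n \<in> pow_ideal x n))"

text \<open>R / x R is a perfect F_p-algebra: p = 0 in R/xR and Frobenius on R/xR is bijective.\<close>
definition perfect_mod :: "nat \<Rightarrow> 'r::comm_ring_1 \<Rightarrow> bool" where
  "perfect_mod p x \<longleftrightarrow>
     of_nat p \<in> pow_ideal x 1 \<and>
     (\<forall>b. b ^ p \<in> pow_ideal x 1 \<longrightarrow> b \<in> pow_ideal x 1) \<and>
     (\<forall>b. \<exists>c. b - c ^ p \<in> pow_ideal x 1)"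

text \<open>For an R-submodule M of R and an R-algebra B (structure map phi),
  M \<otimes>_R B is the free abelian group on M \<times> B (finitely supported functions
  M \<times> B \<Rightarrow> int) modulo the subgroup generated by the bilinearity/balancing relations.\<close>
definition delta :: "'x \<Rightarrow> 'x \<Rightarrow> int" where
  "delta z = (\<lambda>w. if w = z then 1 else 0)"

inductive_set tensor_rels :: "'r::comm_ring_1 set \<Rightarrow> ('r \<Rightarrow> 'b::comm_ring_1) \<Rightarrow> ('r \<times> 'b \<Rightarrow> int) set"
  for M :: "'r set" and \<phi> :: "'r \<Rightarrow> 'b" where
  zero: "(\<lambda>_. 0) \<in> tensor_rels M \<phi>"
| addl: "x \<in> M \<Longrightarrow> x' \<in> M \<Longrightarrow>
     (\<lambda>z. delta (x + x', b) z - delta (x, b) z - delta (x', b) z) \<in> tensor_rels M \<phi>"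
| addr: "x \<in> M \<Longrightarrow>
     (\<lambda>z. delta (x, b + b') z - delta (x, b) z - delta (x, b') z) \<in> tensor_rels M \<phi>"
| smul: "x \<in> M \<Longrightarrow> r * x \<in> M \<Longrightarrow>
     (\<lambda>z. delta (r * x, b) z - delta (x, \<phi> r * b) z) \<in> tensor_rels M \<phi>"
| plus: "u \<in> tensor_rels M \<phi> \<Longrightarrow> v \<in> tensor_rels M \<phi> \<Longrightarrow> (\<lambda>z. u z + v z) \<in> tensor_rels M \<phi>"
| uminus: "u \<in> tensor_rels M \<phi> \<Longrightarrow> (\<lambda>z. - u z) \<in> tensor_rels M \<phi>"

text \<open>The multiplication map M \<otimes>_R B \<rightarrow> B, x \<otimes> b \<mapsto> phi(x) b, is injective.\<close>
definition mult_map_injective :: "'r::comm_ring_1 set \<Rightarrow> ('r \<Rightarrow> 'b::comm_ring_1) \<Rightarrow> bool" where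
  "mult_map_injective M \<phi> \<longleftrightarrow>
     (\<forall>u :: 'r \<times> 'b \<Rightarrow> int.
        finite {z. u z \<noteq> 0} \<and> {z. u z \<noteq> 0} \<subseteq> M \<times> UNIV \<and>
        (\<Sum>z\<in>{z. u z \<noteq> 0}. of_int (u z) * (\<phi> (fst z) * snd z)) = 0
        \<longrightarrow> u \<in> tensor_rels M \<phi>)"

text \<open>B (an R-algebra via phi) is an object of CRP_R, where piR is the image of \<pi> in R.\<close>
definition CRP :: "nat \<Rightarrow> 'r::comm_ring_1 \<Rightarrow> ('r \<Rightarrow> 'b::comm_ring_1) \<Rightarrow> bool" where
  "CRP p piR \<phi> \<longleftrightarrow>
     adically_complete (\<phi> piR) \<and> perfect_mod p (\<phi> piR) \<and>
     mult_map_injective (pow_ideal piR 1) \<phi>"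

text \<open>A is a Lazardian O-algebra (structure map f), \<pi> being the image of \<pi> in O.\<close>
definition lazardian :: "'o::comm_ring_1 \<Rightarrow> ('o \<Rightarrow> 'a::comm_ring_1) \<Rightarrow> bool" where
  "lazardian \<pi> f \<longleftrightarrow> adically_complete (f \<pi>) \<and> mult_map_injective (pow_ideal \<pi> 1) f"

text \<open>Data of a (\<pi>-adically continuous) ring map L^{(t)}_{m,q} \<rightarrow> O: omega i k is the image
  of omega_i^{q^k} (k \<in> Z), \<pi> the image of \<pi>.\<close>
definition L_map_data :: "nat \<Rightarrow> nat \<Rightarrow> int \<Rightarrow> enat \<Rightarrow> (nat \<Rightarrow> int \<Rightarrow> 'o::comm_ring_1) \<Rightarrow> 'o \<Rightarrow> bool" where
  "L_map_data p q t m \<omega> \<pi> \<longleftrightarrow>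
     (\<forall>i k. \<omega> i k ^ q = \<omega> i (k + 1)) \<and>
     (case m of
        enat k \<Rightarrow> \<pi> ^ (k + 1) = 0 \<and> of_nat p = (\<Sum>i=1..k. \<omega> i t * \<pi> ^ i)
      | \<infinity> \<Rightarrow> (\<forall>n. of_nat p - (\<Sum>i=1..n. \<omega> i t * \<pi> ^ i) \<in> pow_ideal \<pi> (Suc n)))"

text \<open>The tensor condition
  \<pi> L \<otimes>_L O \<rightarrow> O injective is expressed via Ann_L(\<pi>) = \<pi>^m L (= 0 for m = \<infinity>),
  i.e. Ann_O(\<pi>) \<subseteq> \<pi>^m O.\<close>
definition CRP_L :: "nat \<Rightarrow> enat \<Rightarrow> 'o::comm_ring_1 \<Rightarrow> bool" where
  "CRP_L p m \<pi> \<longleftrightarrow>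
     adically_complete \<pi> \<and> perfect_mod p \<pi> \<and>
     (\<forall>b. \<pi> * b = 0 \<longrightarrow>
        (case m of enat k \<Rightarrow> b \<in> pow_ideal \<pi> k | \<infinity> \<Rightarrow> b = 0))"

end

theory Submission imports Defs begin

(* Since \<pi> has the same image in B along both structure maps, completeness and perfectness
  of B / \<pi>B are literally the same conditions on both sides; only the tensor conditions
  differ.  Lazardianity of A, i.e. injectivity of \<pi>O \<otimes>_O A \<rightarrow> A, identifies \<pi>O \<otimes>_O A
  with \<pi>A, so \<pi>A \<otimes>_A B \<cong> \<pi>O \<otimes>_O A \<otimes>_A B \<cong> \<pi>O \<otimes>_O B compatibly with the multiplication
  maps to B.  Concretely, x \<otimes> b \<mapsto> f x \<otimes> b and \<pi>a \<otimes> b \<mapsto> \<pi> \<otimes> g a * b are mutually inverse;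
  the second is well defined because f \<pi> * a = 0 forces \<pi> \<otimes> a = 0 in \<pi>O \<otimes>_O A. *)

definition pushforward :: "('x \<Rightarrow> 'y) \<Rightarrow> ('x \<Rightarrow> int) \<Rightarrow> 'y \<Rightarrow> int" where
  "pushforward F u = (\<lambda>w. \<Sum>z\<in>{z. u z \<noteq> 0}. u z * delta (F z) w)"

definition mult_eval :: "('r \<Rightarrow> 'b::comm_ring_1) \<Rightarrow> ('r \<times> 'b \<Rightarrow> int) \<Rightarrow> 'b" where
  "mult_eval \<phi> u = (\<Sum>z\<in>{z. u z \<noteq> 0}. of_int (u z) * (\<phi> (fst z) * snd z))"

lemma sum_of_int_delta_mult:
  assumes "finite S" "a \<in> S"
  shows "(\<Sum>z\<in>S. (of_int (delta a z) :: 'c::comm_ring_1) * h z) = h a"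
proof -
  have "(\<Sum>z\<in>S. (of_int (delta a z) :: 'c) * h z) = (\<Sum>z\<in>S. if z = a then h z else 0)"
    by (rule sum.cong) (simp_all add: delta_def)
  then show ?thesis using assms by simp
qed

lemma finite_support_delta: "finite {z. delta a z \<noteq> 0}"
  by (simp add: delta_def)

lemma finite_support_diff:
  "finite {z. u z \<noteq> 0} \<Longrightarrow> finite {z. v z \<noteq> 0} \<Longrightarrow> finite {z. u z - v z \<noteq> (0::int)}"
  by (rule finite_subset[of _ "{z. u z \<noteq> 0} \<union> {z. v z \<noteq> 0}"]) auto

lemma pushforward_eq_sum:
  assumes "finite S" "{z. u z \<noteq> 0} \<subseteq> S"
  shows "pushforward F u w = (\<Sum>z\<in>S. u z * delta (F z) w)"
  unfolding pushforward_def by (rule sum.mono_neutral_left) (use assms in auto)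

lemma mult_eval_eq_sum:
  assumes "finite S" "{z. u z \<noteq> 0} \<subseteq> S"
  shows "mult_eval \<phi> u = (\<Sum>z\<in>S. of_int (u z) * (\<phi> (fst z) * snd z))"
  unfolding mult_eval_def by (rule sum.mono_neutral_left) (use assms in auto)

lemma support_pushforward: "{w. pushforward F u w \<noteq> 0} \<subseteq> F ` {z. u z \<noteq> 0}"
proof
  fix w assume "w \<in> {w. pushforward F u w \<noteq> 0}"
  then have "(\<Sum>z\<in>{z. u z \<noteq> 0}. u z * delta (F z) w) \<noteq> 0"
    by (simp add: pushforward_def)
  then obtain z where "z \<in> {z. u z \<noteq> 0}" "u z * delta (F z) w \<noteq> 0"
    by (rule sum.not_neutral_contains_not_neutral)
  then show "w \<in> F ` {z. u z \<noteq> 0}" by (auto simp: delta_def split: if_splits)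
qed

lemma finite_support_pushforward:
  "finite {z. u z \<noteq> 0} \<Longrightarrow> finite {w. pushforward F u w \<noteq> 0}"
  by (rule finite_subset[OF support_pushforward]) simp

lemma pushforward_delta: "pushforward F (delta a) = delta (F a)"
  by (rule ext, subst pushforward_eq_sum[of "{a}"]) (auto simp: delta_def)

lemma pushforward_zero: "pushforward F (\<lambda>_. 0) = (\<lambda>_. 0)"
  by (simp add: pushforward_def)

lemma pushforward_uminus: "pushforward F (\<lambda>z. - u z) = (\<lambda>w. - pushforward F u w)"
  by (simp add: pushforward_def sum_negf)

lemma pushforward_add:
  assumes "finite {z. u z \<noteq> 0}" "finite {z. v z \<noteq> 0}"
  shows "pushforward F (\<lambda>z. u z + v z) = (\<lambda>w. pushforward F u w + pushforward F v w)"
proof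
  fix w
  let ?S = "{z. u z \<noteq> 0} \<union> {z. v z \<noteq> 0}"
  have S: "finite ?S" using assms by simp
  have "pushforward F (\<lambda>z. u z + v z) w = (\<Sum>z\<in>?S. (u z + v z) * delta (F z) w)"
    by (rule pushforward_eq_sum[OF S]) auto
  also have "\<dots> = pushforward F u w + pushforward F v w"
    by (simp add: pushforward_eq_sum[OF S] distrib_right sum.distrib)
  finally show "pushforward F (\<lambda>z. u z + v z) w = pushforward F u w + pushforward F v w" .
qed

lemma pushforward_diff:
  assumes "finite {z. u z \<noteq> 0}" "finite {z. v z \<noteq> 0}"
  shows "pushforward F (\<lambda>z. u z - v z) = (\<lambda>w. pushforward F u w - pushforward F v w)"
  using pushforward_add[of u "\<lambda>z. - v z" F] assms by (simp add: pushforward_uminus)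

lemma pushforward_comp:
  assumes fin: "finite {z. u z \<noteq> 0}"
  shows "pushforward G (pushforward F u) = pushforward (G \<circ> F) u"
proof
  fix w
  let ?S = "{z. u z \<noteq> 0}"
  have FS: "finite (F ` ?S)" using fin by simp
  have "pushforward G (pushforward F u) w = (\<Sum>y\<in>F ` ?S. pushforward F u y * delta (G y) w)"
    by (rule pushforward_eq_sum[OF FS support_pushforward])
  also have "\<dots> = (\<Sum>z\<in>?S. u z * (\<Sum>y\<in>F ` ?S. of_int (delta (F z) y) * delta (G y) w))"
    by (simp add: pushforward_def sum_distrib_right sum_distrib_left mult.assoc sum.swap[of _ "F ` ?S"])
  also have "\<dots> = pushforward (G \<circ> F) u w"
    unfolding pushforward_def
    by (rule sum.cong) (simp_all add: sum_of_int_delta_mult[where 'c=int, simplified] FS)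
  finally show "pushforward G (pushforward F u) w = pushforward (G \<circ> F) u w" .
qed

lemma mult_eval_pushforward:
  assumes fin: "finite {z. u z \<noteq> 0}"
    and compat: "\<And>z. u z \<noteq> 0 \<Longrightarrow> \<psi> (fst (F z)) * snd (F z) = \<phi> (fst z) * snd z"
  shows "mult_eval \<psi> (pushforward F u) = mult_eval \<phi> u"
proof -
  let ?S = "{z. u z \<noteq> 0}"
  have FS: "finite (F ` ?S)" using fin by simp
  have "mult_eval \<psi> (pushforward F u) = (\<Sum>w\<in>F ` ?S. of_int (pushforward F u w) * (\<psi> (fst w) * snd w))"
    by (rule mult_eval_eq_sum[OF FS support_pushforward])
  also have "\<dots> = (\<Sum>z\<in>?S. of_int (u z) * (\<Sum>w\<in>F ` ?S. of_int (delta (F z) w) * (\<psi> (fst w) * snd w)))"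
    by (simp add: pushforward_def sum_distrib_right sum_distrib_left mult.assoc sum.swap[of _ "F ` ?S"])
  also have "\<dots> = mult_eval \<phi> u"
    unfolding mult_eval_def by (rule sum.cong) (simp_all add: sum_of_int_delta_mult FS compat)
  finally show ?thesis .
qed

lemma finite_support_tensor_rels: "u \<in> tensor_rels M \<phi> \<Longrightarrow> finite {z. u z \<noteq> 0}"
proof (induction rule: tensor_rels.induct)
  case (plus u v)
  show ?case by (rule finite_subset[of _ "{z. u z \<noteq> 0} \<union> {z. v z \<noteq> 0}"]) (use plus in auto)
qed (intro finite_support_diff finite_support_delta | simp)+

lemma tensor_rels_diff:
  "u \<in> tensor_rels M \<phi> \<Longrightarrow> v \<in> tensor_rels M \<phi> \<Longrightarrow> (\<lambda>z. u z - v z) \<in> tensor_rels M \<phi>"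
  using tensor_rels.plus[OF _ tensor_rels.uminus, of u M \<phi> v] by simp

lemma tensor_rels_int_mult:
  assumes u: "u \<in> tensor_rels M \<phi>"
  shows "(\<lambda>z. k * u z) \<in> tensor_rels M \<phi>"
proof (induction k rule: int_induct[where k = 0])
  case base
  show ?case using tensor_rels.zero by simp
next
  case (step1 i)
  from tensor_rels.plus[OF step1.IH u] show ?case by (simp add: distrib_right)
next
  case (step2 i)
  from tensor_rels_diff[OF step2.IH u] show ?case by (simp add: left_diff_distrib)
qed

lemma tensor_rels_sum:
  "finite S \<Longrightarrow> (\<And>z. z \<in> S \<Longrightarrow> v z \<in> tensor_rels M \<phi>) \<Longrightarrow>
     (\<lambda>w. \<Sum>z\<in>S. c z * v z w) \<in> tensor_rels M \<phi>"
proof (induction S rule: finite_induct)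
  case empty
  then show ?case using tensor_rels.zero by simp
next
  case (insert x S)
  then show ?case
    using tensor_rels.plus[OF tensor_rels_int_mult[of "v x" M \<phi> "c x"]] by simp
qed

lemma pushforward_tensor_rels:
  assumes "u \<in> tensor_rels M \<phi>"
    and addl: "\<And>x x' b. x \<in> M \<Longrightarrow> x' \<in> M \<Longrightarrow>
      (\<lambda>w. delta (F (x + x', b)) w - delta (F (x, b)) w - delta (F (x', b)) w) \<in> tensor_rels N \<psi>"
    and addr: "\<And>x b b'. x \<in> M \<Longrightarrow>
      (\<lambda>w. delta (F (x, b + b')) w - delta (F (x, b)) w - delta (F (x, b')) w) \<in> tensor_rels N \<psi>"
    and smul: "\<And>x r b. x \<in> M \<Longrightarrow> r * x \<in> M \<Longrightarrow>
      (\<lambda>w. delta (F (r * x, b)) w - delta (F (x, \<phi> r * b)) w) \<in> tensor_rels N \<psi>"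
  shows "pushforward F u \<in> tensor_rels N \<psi>"
  using assms(1)
proof (induction rule: tensor_rels.induct)
  case zero
  then show ?case by (simp add: pushforward_zero tensor_rels.zero)
next
  case (addl x x' b)
  then show ?case
    by (simp only: pushforward_diff pushforward_delta finite_support_delta finite_support_diff assms(2))
next
  case (addr x b b')
  then show ?case
    by (simp only: pushforward_diff pushforward_delta finite_support_delta finite_support_diff assms(3))
next
  case (smul x r b)
  then show ?case
    by (simp only: pushforward_diff pushforward_delta finite_support_delta assms(4))
next
  case (plus u v)
  then show ?case
    by (simp add: pushforward_add finite_support_tensor_rels tensor_rels.plus)
next
  case (uminus u)
  then show ?case by (simp add: pushforward_uminus tensor_rels.uminus)
qed

lemma diff_pushforward_in_tensor_rels:
  assumes fin: "finite {z. u z \<noteq> 0}"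
    and gen: "\<And>z. u z \<noteq> 0 \<Longrightarrow> (\<lambda>w. delta z w - delta (G z) w) \<in> tensor_rels M \<phi>"
  shows "(\<lambda>w. u w - pushforward G u w) \<in> tensor_rels M \<phi>"
proof -
  let ?S = "{z. u z \<noteq> 0}"
  have "(\<lambda>w. \<Sum>z\<in>?S. u z * (delta z w - delta (G z) w)) \<in> tensor_rels M \<phi>"
    by (rule tensor_rels_sum[OF fin]) (use gen in auto)
  moreover have "(\<Sum>z\<in>?S. u z * (delta z w - delta (G z) w)) = u w - pushforward G u w" for w
  proof -
    have "(\<Sum>z\<in>?S. u z * delta z w) = (\<Sum>z\<in>?S. if z = w then u z else 0)"
      by (rule sum.cong) (auto simp: delta_def)
    also have "\<dots> = u w"
      using fin by (simp add: sum.delta)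
    finally show ?thesis
      by (simp add: pushforward_def right_diff_distrib sum_subtractf)
  qed
  ultimately show ?thesis by simp
qed

lemma mult_map_injective_delta:
  assumes "mult_map_injective M \<phi>" "x \<in> M" "\<phi> x * a = 0"
  shows "delta (x, a) \<in> tensor_rels M \<phi>"
proof -
  have "{z. delta (x, a) z \<noteq> 0} = {(x, a)}" by (auto simp: delta_def)
  with assms show ?thesis unfolding mult_map_injective_def by (auto simp: delta_def)
qed

lemma mult_map_injective_retract:
  assumes inj: "mult_map_injective N \<psi>"
    and T_mem: "\<And>z. fst z \<in> M \<Longrightarrow> fst (T z) \<in> N"
    and T_eval: "\<And>z. fst z \<in> M \<Longrightarrow> \<psi> (fst (T z)) * snd (T z) = \<phi> (fst z) * snd z"
    and S_rels: "\<And>u. u \<in> tensor_rels N \<psi> \<Longrightarrow> pushforward S u \<in> tensor_rels M \<phi>"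
    and ST: "\<And>z. fst z \<in> M \<Longrightarrow> (\<lambda>w. delta z w - delta (S (T z)) w) \<in> tensor_rels M \<phi>"
  shows "mult_map_injective M \<phi>"
  unfolding mult_map_injective_def
proof (intro allI impI, elim conjE)
  fix u
  assume fin: "finite {z. u z \<noteq> 0}" and sub: "{z. u z \<noteq> 0} \<subseteq> M \<times> UNIV"
    and eval: "(\<Sum>z\<in>{z. u z \<noteq> 0}. of_int (u z) * (\<phi> (fst z) * snd z)) = 0"
  have M: "fst z \<in> M" if "u z \<noteq> 0" for z using sub that by auto
  have "mult_eval \<psi> (pushforward T u) = mult_eval \<phi> u"
    by (rule mult_eval_pushforward[OF fin T_eval[OF M]])
  moreover have "T ` {z. u z \<noteq> 0} \<subseteq> N \<times> UNIV"
    by (intro image_subsetI) (simp add: mem_Times_iff T_mem M)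
  then have "{w. pushforward T u w \<noteq> 0} \<subseteq> N \<times> UNIV"
    by (rule order_trans[OF support_pushforward])
  ultimately have "pushforward T u \<in> tensor_rels N \<psi>"
    using eval finite_support_pushforward[OF fin, of T]
    by (intro inj[unfolded mult_map_injective_def, rule_format]) (auto simp: mult_eval_def)
  then have "pushforward (S \<circ> T) u \<in> tensor_rels M \<phi>"
    using S_rels pushforward_comp[OF fin] by metis
  moreover have "(\<lambda>w. u w - pushforward (S \<circ> T) u w) \<in> tensor_rels M \<phi>"
    using diff_pushforward_in_tensor_rels[OF fin] ST M by simp
  ultimately show "u \<in> tensor_rels M \<phi>"
    using tensor_rels.plus by fastforce
qed

lemma ring_hom_tc_add: "ring_hom_tc h \<Longrightarrow> h (x + y) = h x + h y"
  and ring_hom_tc_mult: "ring_hom_tc h \<Longrightarrow> h (x * y) = h x * h y"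
  by (simp_all add: ring_hom_tc_def)

lemma pow_ideal_1_iff: "y \<in> pow_ideal x 1 \<longleftrightarrow> (\<exists>r. y = x * r)"
  by (auto simp: pow_ideal_def)

lemma self_in_pow_ideal_1: "x \<in> pow_ideal x 1"
  unfolding pow_ideal_1_iff by (rule exI[of _ 1]) simp

(* Not unique when x is a zero divisor; tensor_rels_annihilated makes the choice immaterial. *)
definition cofactor :: "'r::comm_ring_1 \<Rightarrow> 'r \<Rightarrow> 'r" where
  "cofactor x y = (SOME s. y = x * s)"

lemma cofactor: "y \<in> pow_ideal x 1 \<Longrightarrow> y = x * cofactor x y"
  unfolding pow_ideal_1_iff cofactor_def by (rule someI_ex)

lemma tensor_rels_map_left:
  assumes f: "ring_hom_tc f" and fMN: "\<And>x. x \<in> M \<Longrightarrow> f x \<in> N"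
    and u: "u \<in> tensor_rels M (g \<circ> f)"
  shows "pushforward (\<lambda>(x, b). (f x, b)) u \<in> tensor_rels N g"
  using u
proof (rule pushforward_tensor_rels)
  fix x x' b assume "x \<in> M" "x' \<in> M"
  then show "(\<lambda>w. delta ((\<lambda>(x, b). (f x, b)) (x + x', b)) w - delta ((\<lambda>(x, b). (f x, b)) (x, b)) w
      - delta ((\<lambda>(x, b). (f x, b)) (x', b)) w) \<in> tensor_rels N g"
    by (simp add: ring_hom_tc_add[OF f] tensor_rels.addl fMN)
next
  fix x b b' assume "x \<in> M"
  then show "(\<lambda>w. delta ((\<lambda>(x, b). (f x, b)) (x, b + b')) w - delta ((\<lambda>(x, b). (f x, b)) (x, b)) w
      - delta ((\<lambda>(x, b). (f x, b)) (x, b')) w) \<in> tensor_rels N g"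
    by (simp add: tensor_rels.addr fMN)
next
  fix x r b assume "x \<in> M" "r * x \<in> M"
  then show "(\<lambda>w. delta ((\<lambda>(x, b). (f x, b)) (r * x, b)) w
      - delta ((\<lambda>(x, b). (f x, b)) (x, (g \<circ> f) r * b)) w) \<in> tensor_rels N g"
    using fMN[of "r * x"] by (simp add: ring_hom_tc_mult[OF f] tensor_rels.smul fMN)
qed

lemma tensor_rels_map_right:
  assumes g: "ring_hom_tc g" and u: "u \<in> tensor_rels M f"
  shows "pushforward (\<lambda>(x, a). (x, g a * b)) u \<in> tensor_rels M (g \<circ> f)"
  using u
proof (rule pushforward_tensor_rels)
  fix x x' a assume "x \<in> M" "x' \<in> M"
  then show "(\<lambda>w. delta ((\<lambda>(x, a). (x, g a * b)) (x + x', a)) w - delta ((\<lambda>(x, a). (x, g a * b)) (x, a)) w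
      - delta ((\<lambda>(x, a). (x, g a * b)) (x', a)) w) \<in> tensor_rels M (g \<circ> f)"
    by (simp add: tensor_rels.addl)
next
  fix x a a' assume "x \<in> M"
  then show "(\<lambda>w. delta ((\<lambda>(x, a). (x, g a * b)) (x, a + a')) w - delta ((\<lambda>(x, a). (x, g a * b)) (x, a)) w
      - delta ((\<lambda>(x, a). (x, g a * b)) (x, a')) w) \<in> tensor_rels M (g \<circ> f)"
    by (simp add: ring_hom_tc_add[OF g] distrib_right tensor_rels.addr)
next
  fix x r a assume "x \<in> M" "r * x \<in> M"
  from tensor_rels.smul[OF this, of "g a * b" "g \<circ> f"]
  show "(\<lambda>w. delta ((\<lambda>(x, a). (x, g a * b)) (r * x, a)) w
      - delta ((\<lambda>(x, a). (x, g a * b)) (x, f r * a)) w) \<in> tensor_rels M (g \<circ> f)"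
    by (simp add: ring_hom_tc_mult[OF g] mult.assoc)
qed

lemma tensor_rels_annihilated:
  assumes g: "ring_hom_tc g" and inj: "mult_map_injective (pow_ideal \<pi> 1) f"
    and eq: "f \<pi> * a = f \<pi> * a'"
  shows "(\<lambda>w. delta (\<pi>, g a * b) w - delta (\<pi>, g a' * b) w) \<in> tensor_rels (pow_ideal \<pi> 1) (g \<circ> f)"
proof -
  have "delta (\<pi>, a - a') \<in> tensor_rels (pow_ideal \<pi> 1) f"
    by (rule mult_map_injective_delta[OF inj self_in_pow_ideal_1]) (simp add: eq right_diff_distrib)
  from tensor_rels_map_right[OF g this, of b]
  have "delta (\<pi>, g (a - a') * b) \<in> tensor_rels (pow_ideal \<pi> 1) (g \<circ> f)"
    by (simp add: pushforward_delta)
  with tensor_rels.addr[where x = \<pi> and b = "g a' * b" and b' = "g (a - a') * b",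
    OF self_in_pow_ideal_1]
  have "(\<lambda>w. delta (\<pi>, g a' * b + g (a - a') * b) w - delta (\<pi>, g a' * b) w)
      \<in> tensor_rels (pow_ideal \<pi> 1) (g \<circ> f)"
    using tensor_rels.plus by fastforce
  moreover have "g a' * b + g (a - a') * b = g a * b"
    using ring_hom_tc_add[OF g, of a' "a - a'"] by (simp add: distrib_right[symmetric])
  ultimately show ?thesis by simp
qed

lemma tensor_rels_map_cofactor:
  assumes g: "ring_hom_tc g" and inj: "mult_map_injective (pow_ideal \<pi> 1) f"
    and u: "u \<in> tensor_rels (pow_ideal (f \<pi>) 1) g"
  shows "pushforward (\<lambda>(y, b). (\<pi>, g (cofactor (f \<pi>) y) * b)) u \<in> tensor_rels (pow_ideal \<pi> 1) (g \<circ> f)"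
  using u
proof (rule pushforward_tensor_rels)
  let ?c = "cofactor (f \<pi>)"
  fix y y' b assume y: "y \<in> pow_ideal (f \<pi>) 1" "y' \<in> pow_ideal (f \<pi>) 1"
  then have "y + y' \<in> pow_ideal (f \<pi>) 1"
    unfolding pow_ideal_1_iff by (metis distrib_left)
  then have "f \<pi> * ?c (y + y') = f \<pi> * (?c y + ?c y')"
    using cofactor[OF y(1)] cofactor[OF y(2)] by (metis cofactor distrib_left)
  from tensor_rels.plus[OF tensor_rels_annihilated[OF g inj this, of b]
      tensor_rels.addr[where x = \<pi> and b = "g (?c y) * b" and b' = "g (?c y') * b",
        OF self_in_pow_ideal_1]]
  show "(\<lambda>w. delta ((\<lambda>(y, b). (\<pi>, g (?c y) * b)) (y + y', b)) w
      - delta ((\<lambda>(y, b). (\<pi>, g (?c y) * b)) (y, b)) w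
      - delta ((\<lambda>(y, b). (\<pi>, g (?c y) * b)) (y', b)) w) \<in> tensor_rels (pow_ideal \<pi> 1) (g \<circ> f)"
    by (simp add: ring_hom_tc_add[OF g] distrib_right) (simp add: algebra_simps)
next
  fix y b b'
  show "(\<lambda>w. delta ((\<lambda>(y, b). (\<pi>, g (cofactor (f \<pi>) y) * b)) (y, b + b')) w
      - delta ((\<lambda>(y, b). (\<pi>, g (cofactor (f \<pi>) y) * b)) (y, b)) w
      - delta ((\<lambda>(y, b). (\<pi>, g (cofactor (f \<pi>) y) * b)) (y, b')) w) \<in> tensor_rels (pow_ideal \<pi> 1) (g \<circ> f)"
    using tensor_rels.addr[OF self_in_pow_ideal_1] by (simp add: distrib_left)
next
  let ?c = "cofactor (f \<pi>)"
  fix y r b assume y: "y \<in> pow_ideal (f \<pi>) 1" "r * y \<in> pow_ideal (f \<pi>) 1"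
  have "f \<pi> * ?c (r * y) = f \<pi> * (r * ?c y)"
    using cofactor[OF y(1)] cofactor[OF y(2)] by (metis mult.left_commute)
  from tensor_rels_annihilated[OF g inj this, of b]
  show "(\<lambda>w. delta ((\<lambda>(y, b). (\<pi>, g (?c y) * b)) (r * y, b)) w
      - delta ((\<lambda>(y, b). (\<pi>, g (?c y) * b)) (y, g r * b)) w) \<in> tensor_rels (pow_ideal \<pi> 1) (g \<circ> f)"
    by (simp add: ring_hom_tc_mult[OF g] mult_ac)
qed

lemma mult_map_injective_pow_ideal_comp_iff:
  assumes f: "ring_hom_tc f" and g: "ring_hom_tc g"
    and inj: "mult_map_injective (pow_ideal \<pi> 1) f"
  shows "mult_map_injective (pow_ideal (f \<pi>) 1) g \<longleftrightarrow> mult_map_injective (pow_ideal \<pi> 1) (g \<circ> f)"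
proof
  let ?left = "\<lambda>(x, b). (f x, b)" and ?c = "cofactor (f \<pi>)"
  let ?right = "\<lambda>(y, b). (\<pi>, g (?c y) * b)"
  have f_ideal: "f x \<in> pow_ideal (f \<pi>) 1" if "x \<in> pow_ideal \<pi> 1" for x
    using that unfolding pow_ideal_1_iff by (metis ring_hom_tc_mult[OF f])
  show "mult_map_injective (pow_ideal \<pi> 1) (g \<circ> f)" if "mult_map_injective (pow_ideal (f \<pi>) 1) g"
  proof (rule mult_map_injective_retract[OF that, where T = ?left and S = ?right])
    fix z :: "'a \<times> 'c" assume z: "fst z \<in> pow_ideal \<pi> 1"
    show "fst (?left z) \<in> pow_ideal (f \<pi>) 1"
      using f_ideal[OF z] by (simp add: case_prod_beta)
    show "g (fst (?left z)) * snd (?left z) = (g \<circ> f) (fst z) * snd z"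
      by (simp add: case_prod_beta)
    obtain r b where z_eq: "z = (r * \<pi>, b)"
      using z unfolding pow_ideal_1_iff by (metis mult.commute prod.collapse)
    have "f \<pi> * f r = f \<pi> * ?c (f (r * \<pi>))"
      using cofactor[OF f_ideal[OF z]] by (simp add: z_eq ring_hom_tc_mult[OF f] mult.commute)
    from tensor_rels.plus[OF tensor_rels.smul[OF self_in_pow_ideal_1 z[unfolded z_eq fst_conv], of b "g \<circ> f"]
        tensor_rels_annihilated[OF g inj this, of b]]
    show "(\<lambda>w. delta z w - delta (?right (?left z)) w) \<in> tensor_rels (pow_ideal \<pi> 1) (g \<circ> f)"
      by (simp add: z_eq)
  next
    fix u assume "u \<in> tensor_rels (pow_ideal (f \<pi>) 1) g"
    then show "pushforward ?right u \<in> tensor_rels (pow_ideal \<pi> 1) (g \<circ> f)"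
      by (rule tensor_rels_map_cofactor[OF g inj])
  qed
  show "mult_map_injective (pow_ideal (f \<pi>) 1) g" if "mult_map_injective (pow_ideal \<pi> 1) (g \<circ> f)"
  proof (rule mult_map_injective_retract[OF that, where T = ?right and S = ?left])
    fix z :: "'b \<times> 'c" assume z: "fst z \<in> pow_ideal (f \<pi>) 1"
    show "fst (?right z) \<in> pow_ideal \<pi> 1"
      using self_in_pow_ideal_1[of \<pi>] by (simp add: case_prod_beta)
    have y: "fst z = f \<pi> * ?c (fst z)" by (rule cofactor[OF z])
    have "g (f \<pi>) * g (?c (fst z)) = g (fst z)"
      by (metis y ring_hom_tc_mult[OF g])
    then show "(g \<circ> f) (fst (?right z)) * snd (?right z) = g (fst z) * snd z"
      by (simp add: case_prod_beta mult.assoc[symmetric])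
    have "?c (fst z) * f \<pi> \<in> pow_ideal (f \<pi>) 1"
      using z y by (simp add: mult.commute)
    from tensor_rels.smul[OF self_in_pow_ideal_1 this, of "snd z" g]
    show "(\<lambda>w. delta z w - delta (?left (?right z)) w) \<in> tensor_rels (pow_ideal (f \<pi>) 1) g"
      using y by (simp add: case_prod_beta mult.commute)
  next
    fix u assume "u \<in> tensor_rels (pow_ideal \<pi> 1) (g \<circ> f)"
    then show "pushforward ?left u \<in> tensor_rels (pow_ideal (f \<pi>) 1) g"
      using tensor_rels_map_left[OF f f_ideal] by blast
  qed
qed

theorem proposition5p1:
  fixes p q :: nat and t :: int and m :: enat
    and \<omega> :: "nat \<Rightarrow> int \<Rightarrow> 'o::comm_ring_1" and \<pi> :: "'o"
    and f :: "'o \<Rightarrow> 'a::comm_ring_1" and g :: "'a \<Rightarrow> 'b::comm_ring_1"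
  assumes "prime p" and "q > 1" and "\<exists>k. q = p ^ k"
    and "L_map_data p q t m \<omega> \<pi>"
    and "CRP_L p m \<pi>"
    and "ring_hom_tc f" and "lazardian \<pi> f"
    and "ring_hom_tc g"
  shows "CRP p (f \<pi>) g \<longleftrightarrow> CRP p \<pi> (g \<circ> f)"
proof -
  have "mult_map_injective (pow_ideal \<pi> 1) f"
    using \<open>lazardian \<pi> f\<close> by (simp add: lazardian_def)
  with \<open>ring_hom_tc f\<close> \<open>ring_hom_tc g\<close> show ?thesis
    unfolding CRP_def by (simp only: mult_map_injective_pow_ideal_comp_iff comp_apply)
qed

end
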